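(* Let $n\ge 1$ and $k\ge 1$ be integers with $n\ge 2k$. Then: 1. For every $0\le i\le n-2k$, the list $\mathcal{F}(\alpha_{n,k}^i)$ contains every word of $F_n(2,k)$ (so it is a homogeneous Gray code for $F_n(2,k)$), it is suffix partitioned, and its last word is $\gamma_{n,k}$. 2. The list $\mathcal{F}(\gamma_{n,k})$ contains every word of $F_n(2,k)$, it is suffix partitioned, and its last word is $\alpha_{n,k}^0=1(01)^{k-1}0^{n-2k+1}$ if $k$ is even, and $\alpha_{n,k}^{n-2k}=0^{n-2k}1(01)^{k-1}0$ if $k$ is odd.
   Context: The weight of a binary word is its number of 1's. $F_n(2,k)$ is the set of binary words of length $n$ and weight $k$ containing no two consecutive 1's. For $0\le i\le n-2k+1$ let $\alpha_{n,k}^i=0^i1(01)^{k-1}0^{n-2k+1-i}$, and let $\gamma_{n,k}=0^{n-2k}(01)^k$. A homogeneous transposition of a binary word exchanges a 1 and a 0 such that no 1 occurs strictly between the two exchanged positions. For a set $S$ of binary words of the same length and weight and $\alpha\in S$, the list obtained by applying the greedy algorithm for $S$ to $\alpha$ is built as follows: start with the list $(\alpha)$; repeatedly, for the last word $w$ of the current list, among all words obtainable from $w$ by one homogeneous transposition that lie in $S$ and do not already occur in the list, choose the one obtained by transposing the leftmost possible 1 with (among transpositions of that 1) the leftmost possible 0, and append it; stop when no such word exists. $\mathcal{F}(\alpha)$ denotes the list obtained by applying the greedy algorithm for $F_n(2,k)$ to $\alpha\in F_n(2,k)$. A list is suffix partitioned if, for every word $s$, the words of the list having suffix $s$ occupy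 consecutive positions. *)

theory Defs
  imports Main "HOL-Library.Sublist"
begin

definition weight :: "nat list \<Rightarrow> nat" where
  "weight w = count_list w 1"

definition Fn :: "nat \<Rightarrow> nat \<Rightarrow> nat list set" where
  "Fn n k = {w. length w = n \<and> set w \<subseteq> {0,1} \<and> weight w = k \<and>
               (\<forall>m. Suc m < length w \<longrightarrow> \<not> (w ! m = 1 \<and> w ! Suc m = 1))}"

definition alpha :: "nat \<Rightarrow> nat \<Rightarrow> nat \<Rightarrow> nat list" where
  "alpha n k i = replicate i 0 @ [1] @ concat (replicate (k - 1) [0,1])
                 @ replicate (n - 2*k + 1 - i) 0"

definition gamma :: "nat \<Rightarrow> nat \<Rightarrow> nat list" where
  "gamma n k = replicate (n - 2*k) 0 @ concat (replicate k [0,1])"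

definition homog_trans_ok :: "nat list \<Rightarrow> nat \<Rightarrow> nat \<Rightarrow> bool" where
  "homog_trans_ok w i j \<longleftrightarrow> i < length w \<and> j < length w \<and> w ! i = 1 \<and> w ! j = 0 \<and>
     (\<forall>m. min i j < m \<and> m < max i j \<longrightarrow> w ! m \<noteq> 1)"

definition transpose_at :: "nat list \<Rightarrow> nat \<Rightarrow> nat \<Rightarrow> nat list" where
  "transpose_at w i j = w[i := w ! j, j := w ! i]"

definition greedy_cand :: "nat list set \<Rightarrow> nat list list \<Rightarrow> nat \<Rightarrow> nat \<Rightarrow> bool" where
  "greedy_cand S L i j \<longleftrightarrow> homog_trans_ok (last L) i j \<and>
     transpose_at (last L) i j \<in> S \<and> transpose_at (last L) i j \<notin> set L"

text \<open>Next word chosen by the greedy rule: leftmost 1, then leftmost 0.\<close>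
definition greedy_next :: "nat list set \<Rightarrow> nat list list \<Rightarrow> nat list option" where
  "greedy_next S L =
     (if \<exists>i j. greedy_cand S L i j then
        (let i0 = (LEAST i. \<exists>j. greedy_cand S L i j);
             j0 = (LEAST j. greedy_cand S L i0 j)
         in Some (transpose_at (last L) i0 j0))
      else None)"

definition greedy_step :: "nat list set \<Rightarrow> nat list list \<Rightarrow> nat list list" where
  "greedy_step S L = (case greedy_next S L of None \<Rightarrow> L | Some w \<Rightarrow> L @ [w])"

text \<open>The greedy list: each step appends a new word of S, so after card S steps the
  process has stopped (once stopped it stays unchanged).\<close>
definition greedy :: "nat list set \<Rightarrow> nat list \<Rightarrow> nat list list" where
  "greedy S a = (greedy_step S ^^ card S) [a]"

definition calF :: "nat \<Rightarrow> nat \<Rightarrow> nat list \<Rightarrow> nat list list" where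
  "calF n k a = greedy (Fn n k) a"

definition suffix_partitioned :: "nat list list \<Rightarrow> bool" where
  "suffix_partitioned L \<longleftrightarrow> (\<forall>s a b c. a \<le> b \<and> b \<le> c \<and> c < length L \<and>
      suffix s (L ! a) \<and> suffix s (L ! c) \<longrightarrow> suffix s (L ! b))"

end

theory Submission
  imports Defs
begin

(*
  Every word of F_n(2,k) ends in 0 or in 01, so F_n(2,k) = F_{n-1}(2,k) 0 \<union> F_{n-2}(2,k-1) 01.
  On words with a fixed suffix the greedy algorithm behaves exactly like the greedy algorithm
  on the prefixes, because every move touching the suffix comes after all moves inside the
  prefix. Hence F(alpha^i_{n,k}) is the greedy list of F_{n-1}(2,k) with 0 appended, followed,
  after the last 1 jumps onto the final position, by the greedy list of F_{n-2}(2,k-1) with 01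
  appended; F(gamma_{n,k}) consists of the same two blocks in the opposite order. By induction
  on n the first and last words of the blocks are alpha- and gamma-words of smaller parameters
  (the parity of k deciding which end is reached), and the block structure makes the lists
  suffix partitioned.
*)

definition no_11 :: "nat list \<Rightarrow> bool" where
  "no_11 w \<longleftrightarrow> (\<forall>m. Suc m < length w \<longrightarrow> \<not> (w ! m = 1 \<and> w ! Suc m = 1))"

lemma no_11_Nil [simp]: "no_11 []"
  and no_11_single [simp]: "no_11 [x]"
  by (simp_all add: no_11_def)

lemma no_11_Cons_Cons [simp]: "no_11 (x # y # zs) \<longleftrightarrow> \<not> (x = 1 \<and> y = 1) \<and> no_11 (y # zs)"
  unfolding no_11_def by (auto simp: less_Suc_eq_0_disj)

lemma no_11_append:
  "no_11 (u @ v) \<longleftrightarrow> no_11 u \<and> no_11 v \<and> \<not> (u \<noteq> [] \<and> v \<noteq> [] \<and> last u = 1 \<and> hd v = 1)"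
proof (induction u rule: induct_list012)
  case (2 x)
  then show ?case by (cases v) auto
qed auto

lemma no_11_Cons_0 [simp]: "no_11 (0 # xs) \<longleftrightarrow> no_11 xs"
  by (cases xs) auto

lemma no_11_ConsD: "no_11 (x # xs) \<Longrightarrow> no_11 xs"
  using no_11_append[of "[x]" xs] by simp

lemma no_11_replicate_0_append [simp]: "no_11 (replicate r 0 @ xs) \<longleftrightarrow> no_11 xs"
  by (induction r) auto

lemma no_11_replicate_0 [simp]: "no_11 (replicate r 0)"
  using no_11_replicate_0_append[of r "[]"] by simp

definition rep01 :: "nat \<Rightarrow> nat list" where
  "rep01 k = concat (replicate k [0, 1])"

lemma rep01_0 [simp]: "rep01 0 = []"
  and rep01_Suc: "rep01 (Suc k) = 0 # 1 # rep01 k"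
  by (simp_all add: rep01_def)

lemma rep01_Suc_snoc: "rep01 (Suc k) = rep01 k @ [0, 1]"
  by (induction k) (simp_all add: rep01_Suc)

lemma length_rep01 [simp]: "length (rep01 k) = 2 * k"
  and count_list_rep01 [simp]: "count_list (rep01 k) 1 = k"
  and no_11_one_rep01 [simp]: "no_11 (1 # rep01 k)"
  and no_11_rep01 [simp]: "no_11 (rep01 k)"
  by (induction k) (auto simp: rep01_Suc)

lemma Fn_iff:
  "w \<in> Fn n k \<longleftrightarrow> length w = n \<and> set w \<subseteq> {0, 1} \<and> count_list w 1 = k \<and> no_11 w"
  by (simp add: Fn_def weight_def no_11_def)

lemma finite_Fn: "finite (Fn n k)"
proof (rule finite_subset)
  show "Fn n k \<subseteq> {w. set w \<subseteq> {0, 1} \<and> length w = n}"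
    by (auto simp: Fn_iff)
qed (simp add: finite_lists_length_eq)

lemma snoc_0_in_Fn_iff: "v @ [0] \<in> Fn (Suc m) k \<longleftrightarrow> v \<in> Fn m k"
  by (auto simp: Fn_iff no_11_append)

lemma snoc_01_in_Fn_iff: "v @ [0, 1] \<in> Fn (Suc (Suc m)) k \<longleftrightarrow> 0 < k \<and> v \<in> Fn m (k - 1)"
  by (auto simp: Fn_iff no_11_append)

lemma Fn_snoc_iffs:
  assumes "2 \<le> n" "0 < k"
  shows "\<forall>t. t @ [0] \<in> Fn n k \<longleftrightarrow> t \<in> Fn (n - 1) k"
    and "\<forall>t. t @ [0, 1] \<in> Fn n k \<longleftrightarrow> t \<in> Fn (n - 2) (k - 1)"
proof -
  obtain m where "n = Suc (Suc m)"
    using assms(1) by (metis add_2_eq_Suc le_Suc_ex)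
  then show "\<forall>t. t @ [0] \<in> Fn n k \<longleftrightarrow> t \<in> Fn (n - 1) k"
    and "\<forall>t. t @ [0, 1] \<in> Fn n k \<longleftrightarrow> t \<in> Fn (n - 2) (k - 1)"
    using assms(2) snoc_0_in_Fn_iff snoc_01_in_Fn_iff by simp_all
qed

lemma Fn_split:
  assumes "2 \<le> n" "0 < k"
  shows "Fn n k = (\<lambda>v. v @ [0]) ` Fn (n - 1) k \<union> (\<lambda>v. v @ [0, 1]) ` Fn (n - 2) (k - 1)"
proof -
  obtain m where n: "n = Suc (Suc m)"
    using assms(1) by (metis add_2_eq_Suc le_Suc_ex)
  have "w \<in> (\<lambda>v. v @ [0]) ` Fn (Suc m) k \<union> (\<lambda>v. v @ [0, 1]) ` Fn m (k - 1)"
    if w: "w \<in> Fn (Suc (Suc m)) k" for w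
  proof -
    obtain u b where u: "w = u @ [b]" "b \<in> {0, 1}"
      using w by (cases w rule: rev_cases) (auto simp: Fn_iff)
    show ?thesis
    proof (cases "b = 0")
      case True
      then show ?thesis using w u snoc_0_in_Fn_iff by blast
    next
      case False
      obtain v c where v: "u = v @ [c]" "c \<in> {0, 1}"
        using w u by (cases u rule: rev_cases) (auto simp: Fn_iff)
      then have "c = 0" "b = 1"
        using w u False by (auto simp: Fn_iff no_11_append)
      then have "w = v @ [0, 1]" "v \<in> Fn m (k - 1)"
        using w u v snoc_01_in_Fn_iff by auto
      then show ?thesis by blast
    qed
  qed
  then show ?thesis
    using assms(2) snoc_0_in_Fn_iff snoc_01_in_Fn_iff by (auto simp: n)
qed

lemma count_list_1_le_if_no_11: "no_11 w \<Longrightarrow> 2 * count_list w 1 \<le> length w + 1"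
proof (induction w rule: induct_list012)
  case (3 x y zs)
  then show ?case by (cases "x = 1") (auto dest: no_11_ConsD)
qed auto

lemma Fn_0: "Fn m 0 = {replicate m 0}"
proof -
  have "w = replicate m 0" if "w \<in> Fn m 0" for w
    using that by (auto simp: Fn_iff count_list_0_iff intro!: replicate_eqI)
  then show ?thesis by (auto simp: Fn_iff count_list_0_iff)
qed

lemma Fn_tight: "Fn (2 * k + 1) (Suc k) = {1 # rep01 k}"
proof (induction k)
  case 0
  have "w = [1]" if "w \<in> Fn 1 1" for w
    using that by (cases w) (auto simp: Fn_iff split: if_splits)
  then show ?case by (auto simp: Fn_iff)
next
  case (Suc k)
  have "Fn (2 * Suc k) (Suc (Suc k)) = {}"
    using count_list_1_le_if_no_11 by (fastforce simp: Fn_iff)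
  then show ?case
    using Fn_split[of "2 * Suc k + 1" "Suc (Suc k)"] Suc by (simp add: rep01_Suc_snoc)
qed

lemma greedy_next_SomeE:
  assumes "greedy_next S L = Some w"
  obtains i j where "greedy_cand S L i j" "w = transpose_at (last L) i j"
    "\<And>i' j'. greedy_cand S L i' j' \<Longrightarrow> i < i' \<or> (i = i' \<and> j \<le> j')"
proof -
  have ex: "\<exists>i j. greedy_cand S L i j"
    using assms unfolding greedy_next_def by (auto split: if_splits)
  define i where "i = (LEAST i. \<exists>j. greedy_cand S L i j)"
  define j where "j = (LEAST j. greedy_cand S L i j)"
  have "\<exists>j. greedy_cand S L i j"
    unfolding i_def using ex by (rule LeastI_ex)
  then have "greedy_cand S L i j"
    unfolding j_def by (rule LeastI_ex)
  moreover have "w = transpose_at (last L) i j"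
    using assms ex unfolding greedy_next_def i_def j_def by (simp add: Let_def)
  moreover have "i < i' \<or> (i = i' \<and> j \<le> j')" if "greedy_cand S L i' j'" for i' j'
  proof -
    have "i \<le> i'"
      unfolding i_def using that by (blast intro: Least_le)
    moreover have "i = i' \<Longrightarrow> j \<le> j'"
      unfolding j_def using that by (blast intro: Least_le)
    ultimately show ?thesis by linarith
  qed
  ultimately show thesis by (rule that)
qed

lemma greedy_next_eqI:
  assumes "greedy_cand S L i j"
    and "\<And>i' j'. greedy_cand S L i' j' \<Longrightarrow> i < i' \<or> (i = i' \<and> j \<le> j')"
  shows "greedy_next S L = Some (transpose_at (last L) i j)"
proof -
  have "(LEAST i. \<exists>j. greedy_cand S L i j) = i"
    by (rule Least_equality) (use assms in force)+
  moreover have "(LEAST j. greedy_cand S L i j) = j"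
    by (rule Least_equality) (use assms in force)+
  ultimately show ?thesis
    using assms(1) unfolding greedy_next_def by (auto simp: Let_def)
qed

lemma greedy_next_eq_None_iff: "greedy_next S L = None \<longleftrightarrow> (\<forall>i j. \<not> greedy_cand S L i j)"
  unfolding greedy_next_def by (auto simp: Let_def)

lemma greedy_next_Some_new: "greedy_next S L = Some w \<Longrightarrow> w \<in> S \<and> w \<notin> set L"
  by (elim greedy_next_SomeE) (auto simp: greedy_cand_def)

inductive greedy_run :: "nat list set \<Rightarrow> nat list list \<Rightarrow> nat list list \<Rightarrow> bool" for S where
  stop: "greedy_next S L = None \<Longrightarrow> greedy_run S L L"
| step: "greedy_next S L = Some w \<Longrightarrow> greedy_run S (L @ [w]) L' \<Longrightarrow> greedy_run S L L'"

lemma greedy_run_extends: "greedy_run S L L' \<Longrightarrow> \<exists>M. L' = L @ M"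
  by (induction rule: greedy_run.induct) auto

lemma greedy_run_stopped: "greedy_run S L L' \<Longrightarrow> greedy_next S L' = None"
  by (induction rule: greedy_run.induct) auto

lemma greedy_run_distinct:
  "greedy_run S L L' \<Longrightarrow> distinct L \<Longrightarrow> distinct L' \<and> set L' \<subseteq> set L \<union> S"
proof (induction rule: greedy_run.induct)
  case (step L w L')
  then show ?case using greedy_next_Some_new[OF step.hyps(1)] by auto
qed simp

lemma greedy_run_funpow:
  "greedy_run S L L' \<Longrightarrow> length L' \<le> length L + m \<Longrightarrow> (greedy_step S ^^ m) L = L'"
proof (induction arbitrary: m rule: greedy_run.induct)
  case (stop L)
  then show ?case by (induction m) (simp_all add: greedy_step_def)
next
  case (step L w L')
  obtain m' where m: "m = Suc m'"
    using step.prems greedy_run_extends[OF step.hyps(2)] by (cases m) auto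
  then show ?case
    using step by (simp add: funpow_Suc_right greedy_step_def del: funpow.simps)
qed

lemma greedy_eq_if_greedy_run:
  assumes "greedy_run S [a] L" "finite S"
  shows "greedy S a = L"
proof -
  obtain M where L: "L = a # M" "distinct L"
    using greedy_run_extends[OF assms(1)] greedy_run_distinct[OF assms(1)] by auto
  moreover have "set L \<subseteq> insert a S"
    using greedy_run_distinct[OF assms(1)] by simp
  ultimately have "set M \<subseteq> S" "distinct M"
    by auto
  then have "length M \<le> card S"
    using assms(2) card_mono distinct_card by metis
  then show ?thesis
    unfolding greedy_def using greedy_run_funpow[OF assms(1)] L(1) by simp
qed

lemma greedy_run_singleton: "greedy_run {u} [u] [u]"
  by (rule greedy_run.stop) (simp add: greedy_next_eq_None_iff greedy_cand_def)

lemma length_transpose_at [simp]: "length (transpose_at u i j) = length u"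
  by (simp add: transpose_at_def)

lemma homog_trans_ok_append:
  assumes "i < length u" "j < length u"
  shows "homog_trans_ok (u @ s) i j \<longleftrightarrow> homog_trans_ok u i j"
  using assms unfolding homog_trans_ok_def by (auto simp: nth_append)

lemma transpose_at_append:
  "i < length u \<Longrightarrow> j < length u \<Longrightarrow> transpose_at (u @ s) i j = transpose_at u i j @ s"
  by (simp add: transpose_at_def nth_append list_update_append)

lemma greedy_cand_append_iff:
  assumes "Q \<noteq> []" "i < length (last Q)" "j < length (last Q)"
    and "\<forall>h \<in> set H. \<not> suffix s h"
    and "\<forall>t. t @ s \<in> S \<longleftrightarrow> t \<in> S'"
  shows "greedy_cand S (H @ map (\<lambda>v. v @ s) Q) i j \<longleftrightarrow> greedy_cand S' Q i j"
proof -
  have "t @ s \<in> set (H @ map (\<lambda>v. v @ s) Q) \<longleftrightarrow> t \<in> set Q" for t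
    using assms(4) unfolding suffix_def by auto
  then show ?thesis
    using assms homog_trans_ok_append transpose_at_append
    by (simp add: greedy_cand_def last_map)
qed

text \<open>Moves touching the suffix s are tried only after all moves inside the prefix u, so greedy
  runs on the prefixes lift to greedy runs on S (\<open>greedy_run_append\<close>).\<close>
definition suffix_moves_last :: "nat list set \<Rightarrow> nat list \<Rightarrow> bool" where
  "suffix_moves_last S s \<longleftrightarrow> (\<forall>u i j i' j'.
     homog_trans_ok (u @ s) i j \<and> transpose_at (u @ s) i j \<in> S \<and> \<not> (i < length u \<and> j < length u) \<and>
     homog_trans_ok (u @ s) i' j' \<and> i' < length u \<and> j' < length u \<longrightarrow> i' < i \<or> (i' = i \<and> j' < j))"

lemma greedy_next_append:
  assumes Q: "Q \<noteq> []" and next_Q: "greedy_next S' Q = Some w"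
    and H: "\<forall>h \<in> set H. \<not> suffix s h"
    and S': "\<forall>t. t @ s \<in> S \<longleftrightarrow> t \<in> S'"
    and late: "suffix_moves_last S s"
  shows "greedy_next S (H @ map (\<lambda>v. v @ s) Q) = Some (w @ s)"
proof -
  let ?L = "H @ map (\<lambda>v. v @ s) Q" and ?u = "last Q"
  have last_L: "last ?L = ?u @ s"
    using Q by (simp add: last_map)
  obtain i j where c: "greedy_cand S' Q i j" and w: "w = transpose_at ?u i j"
    and least: "\<And>i' j'. greedy_cand S' Q i' j' \<Longrightarrow> i < i' \<or> (i = i' \<and> j \<le> j')"
    by (rule greedy_next_SomeE[OF next_Q]) blast
  have ij: "i < length ?u" "j < length ?u"
    using c by (simp_all add: greedy_cand_def homog_trans_ok_def)
  have c_L: "greedy_cand S ?L i j"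
    using c greedy_cand_append_iff[OF Q ij H S'] by simp
  have "greedy_next S ?L = Some (transpose_at (last ?L) i j)"
  proof (rule greedy_next_eqI[OF c_L])
    fix i' j' assume c': "greedy_cand S ?L i' j'"
    show "i < i' \<or> (i = i' \<and> j \<le> j')"
    proof (cases "i' < length ?u \<and> j' < length ?u")
      case True
      then show ?thesis
        using c' least greedy_cand_append_iff[OF Q _ _ H S'] by blast
    next
      case False
      have "homog_trans_ok (?u @ s) i' j'" "transpose_at (?u @ s) i' j' \<in> S"
        using c' last_L by (simp_all add: greedy_cand_def)
      moreover have "homog_trans_ok (?u @ s) i j"
        using c_L last_L by (simp add: greedy_cand_def)
      ultimately have "i < i' \<or> (i = i' \<and> j < j')"
        using late False ij unfolding suffix_moves_last_def by blast
      then show ?thesis by auto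
    qed
  qed
  then show ?thesis
    using last_L w transpose_at_append[OF ij] by simp
qed

lemma greedy_run_append:
  assumes "greedy_run S' P P'" "P \<noteq> []"
    and H: "\<forall>h \<in> set H. \<not> suffix s h"
    and S': "\<forall>t. t @ s \<in> S \<longleftrightarrow> t \<in> S'"
    and late: "suffix_moves_last S s"
    and "greedy_run S (H @ map (\<lambda>v. v @ s) P') R"
  shows "greedy_run S (H @ map (\<lambda>v. v @ s) P) R"
  using assms(1,2,6)
proof (induction rule: greedy_run.induct)
  case (step L w L')
  then show ?case
    using greedy_next_append[OF step.prems(1) step.hyps(1) H S' late]
    by (auto intro: greedy_run.step)
qed simp

lemma homog_trans_ok_snoc_0_cross:
  assumes h: "homog_trans_ok (u @ [0]) i j" and cross: "\<not> (i < length u \<and> j < length u)"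
  shows "i < length u \<and> j = length u \<and> (\<forall>p. i < p \<and> p < length u \<longrightarrow> u ! p \<noteq> 1)"
proof -
  have "i \<noteq> length u"
    using h by (auto simp: homog_trans_ok_def)
  then have ij: "i < length u" "j = length u"
    using h cross by (auto simp: homog_trans_ok_def)
  moreover have "u ! p \<noteq> 1" if "i < p" "p < length u" for p
    using h that ij unfolding homog_trans_ok_def by (auto simp: nth_append)
  ultimately show ?thesis by blast
qed

lemma suffix_moves_last_0: "suffix_moves_last S [0]"
  unfolding suffix_moves_last_def
proof (intro allI impI)
  fix u i j i' j'
  assume a: "homog_trans_ok (u @ [0]) i j \<and> transpose_at (u @ [0]) i j \<in> S \<and>
    \<not> (i < length u \<and> j < length u) \<and> homog_trans_ok (u @ [0]) i' j' \<and> i' < length u \<and> j' < length u"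
  then have "i < length u" "j = length u" "\<forall>p. i < p \<and> p < length u \<longrightarrow> u ! p \<noteq> 1"
    using homog_trans_ok_snoc_0_cross by blast+
  moreover have "u ! i' = 1"
    using a by (auto simp: homog_trans_ok_def nth_append)
  ultimately show "i' < i \<or> (i' = i \<and> j' < j)"
    using a by (cases i' i rule: linorder_cases) auto
qed

lemma homog_trans_ok_snoc_01_cross:
  assumes h: "homog_trans_ok (u @ [0, 1]) i j" and t: "transpose_at (u @ [0, 1]) i j \<in> Fn n k"
    and cross: "\<not> (i < length u \<and> j < length u)"
  shows "i = Suc (length u)"
proof (rule ccontr)
  assume "i \<noteq> Suc (length u)"
  moreover have "i \<noteq> length u" "j \<noteq> Suc (length u)"
    using h by (auto simp: homog_trans_ok_def nth_append)
  ultimately have ij: "i < length u" "j = length u"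
    using h cross by (auto simp: homog_trans_ok_def)
  let ?t = "transpose_at (u @ [0, 1]) i j"
  have "?t ! length u = 1" "?t ! Suc (length u) = 1"
    using h ij by (auto simp: transpose_at_def homog_trans_ok_def nth_list_update nth_append)
  then have "\<not> no_11 ?t"
    unfolding no_11_def by auto
  then show False
    using t by (simp add: Fn_iff)
qed

lemma suffix_moves_last_01: "suffix_moves_last (Fn n k) [0, 1]"
  unfolding suffix_moves_last_def
proof (intro allI impI)
  fix u i j i' j'
  assume a: "homog_trans_ok (u @ [0, 1]) i j \<and> transpose_at (u @ [0, 1]) i j \<in> Fn n k \<and>
    \<not> (i < length u \<and> j < length u) \<and> homog_trans_ok (u @ [0, 1]) i' j' \<and> i' < length u \<and> j' < length u"
  then have "i = Suc (length u)"
    using homog_trans_ok_snoc_01_cross by blast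
  then show "i' < i \<or> (i' = i \<and> j' < j)"
    using a by simp
qed

lemma transpose_at_to_end:
  "transpose_at (x @ 1 # replicate r 0 @ [0]) (length x) (Suc (length x + r)) = (x @ replicate r 0) @ [0, 1]"
  by (simp add: transpose_at_def nth_append list_update_append) (simp add: replicate_app_Cons_same)

lemma greedy_next_leave_snoc_0:
  assumes Q: "Q \<noteq> []" and u: "last Q = x @ 1 # replicate r 0"
    and stopped: "greedy_next S' Q = None"
    and S': "\<forall>t. t @ [0] \<in> S \<longleftrightarrow> t \<in> S'"
    and new: "(x @ replicate r 0) @ [0, 1] \<in> S"
  shows "greedy_next S (map (\<lambda>v. v @ [0]) Q) = Some ((x @ replicate r 0) @ [0, 1])"
proof -
  let ?L = "map (\<lambda>v. v @ [0]) Q" and ?u = "last Q" and ?m = "Suc (length x + r)"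
  have last_L: "last ?L = x @ 1 # replicate r 0 @ [0]"
    using Q u by (simp add: last_map)
  have c: "greedy_cand S ?L (length x) ?m"
    using new last_L transpose_at_to_end
    by (auto simp: greedy_cand_def homog_trans_ok_def nth_append)
  have "greedy_next S ?L = Some (transpose_at (last ?L) (length x) ?m)"
  proof (rule greedy_next_eqI[OF c])
    fix i' j' assume c': "greedy_cand S ?L i' j'"
    have h': "homog_trans_ok (?u @ [0]) i' j'"
      using c' Q by (simp add: greedy_cand_def last_map)
    show "length x < i' \<or> (length x = i' \<and> ?m \<le> j')"
    proof (cases "i' < length ?u \<and> j' < length ?u")
      case True
      then show ?thesis
        using c' stopped greedy_cand_append_iff[OF Q _ _ _ S', of i' j' "[]"]
        by (simp add: greedy_next_eq_None_iff)
    next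
      case False
      then have "i' < length ?u" "j' = length ?u" "\<forall>p. i' < p \<and> p < length ?u \<longrightarrow> ?u ! p \<noteq> 1"
        using homog_trans_ok_snoc_0_cross[OF h'] by blast+
      moreover have "?u ! i' = 1"
        using h' \<open>i' < length ?u\<close> by (simp add: homog_trans_ok_def nth_append)
      ultimately have "i' = length x" "j' = ?m"
        using u by (auto simp: nth_append nth_Cons' split: if_splits dest: spec[of _ "length x"])
      then show ?thesis by simp
    qed
  qed
  then show ?thesis
    using last_L transpose_at_to_end by simp
qed

definition leftmost_target :: "nat list set \<Rightarrow> nat list \<Rightarrow> nat \<Rightarrow> nat \<Rightarrow> bool" where
  "leftmost_target S w i j \<longleftrightarrow> homog_trans_ok w i j \<and> transpose_at w i j \<in> S \<and>
     (\<forall>j'. homog_trans_ok w i j' \<and> transpose_at w i j' \<in> S \<longrightarrow> j \<le> j')"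

lemma greedy_next_leave_snoc_01:
  assumes Q: "Q \<noteq> []" and stopped: "greedy_next S' Q = None"
    and S': "\<forall>t. t @ [0, 1] \<in> Fn n k \<longleftrightarrow> t \<in> S'"
    and target: "leftmost_target (Fn n k) (last Q @ [0, 1]) (Suc (length (last Q))) j"
  shows "greedy_next (Fn n k) (map (\<lambda>v. v @ [0, 1]) Q) =
    Some (transpose_at (last Q @ [0, 1]) (Suc (length (last Q))) j)"
proof -
  let ?L = "map (\<lambda>v. v @ [0, 1]) Q" and ?u = "last Q"
  let ?t = "transpose_at (?u @ [0, 1]) (Suc (length ?u)) j"
  have last_L: "last ?L = ?u @ [0, 1]"
    using Q by (simp add: last_map)
  have "(?u @ [0, 1]) ! j = 0" "j \<noteq> Suc (length ?u)"
    using target by (auto simp: leftmost_target_def homog_trans_ok_def)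
  then have "last ?t = 0"
    by (simp add: last_conv_nth transpose_at_def nth_list_update)
  then have "?t \<notin> set ?L"
    by auto
  then have c: "greedy_cand (Fn n k) ?L (Suc (length ?u)) j"
    using target last_L by (simp add: greedy_cand_def leftmost_target_def)
  have "greedy_next (Fn n k) ?L = Some (transpose_at (last ?L) (Suc (length ?u)) j)"
  proof (rule greedy_next_eqI[OF c])
    fix i' j' assume c': "greedy_cand (Fn n k) ?L i' j'"
    show "Suc (length ?u) < i' \<or> (Suc (length ?u) = i' \<and> j \<le> j')"
    proof (cases "i' < length ?u \<and> j' < length ?u")
      case True
      then show ?thesis
        using c' stopped greedy_cand_append_iff[OF Q _ _ _ S', of i' j' "[]"]
        by (simp add: greedy_next_eq_None_iff)
    next
      case False
      have "homog_trans_ok (?u @ [0, 1]) i' j'" "transpose_at (?u @ [0, 1]) i' j' \<in> Fn n k"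
        using c' last_L by (simp_all add: greedy_cand_def)
      moreover from this have "i' = Suc (length ?u)"
        using False homog_trans_ok_snoc_01_cross by blast
      ultimately show ?thesis
        using target by (simp add: leftmost_target_def)
    qed
  qed
  then show ?thesis
    using last_L by simp
qed

lemma greedy_next_snoc_01_stops:
  assumes Q: "Q \<noteq> []" and "2 \<le> n" "0 < k" and stopped: "greedy_next S' Q = None"
    and S': "\<forall>t. t @ [0, 1] \<in> Fn n k \<longleftrightarrow> t \<in> S'"
    and H: "\<forall>h \<in> set H. \<not> suffix [0, 1] h"
    and covered: "(\<lambda>v. v @ [0]) ` Fn (n - 1) k \<subseteq> set H"
  shows "greedy_next (Fn n k) (H @ map (\<lambda>v. v @ [0, 1]) Q) = None"
  unfolding greedy_next_eq_None_iff
proof (intro allI notI)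
  fix i j
  let ?L = "H @ map (\<lambda>v. v @ [0, 1]) Q" and ?u = "last Q"
  let ?t = "transpose_at (?u @ [0, 1]) i j"
  assume c: "greedy_cand (Fn n k) ?L i j"
  show False
  proof (cases "i < length ?u \<and> j < length ?u")
    case True
    then show False
      using c stopped greedy_cand_append_iff[OF Q _ _ H S'] by (simp add: greedy_next_eq_None_iff)
  next
    case False
    have h: "homog_trans_ok (?u @ [0, 1]) i j" and t: "?t \<in> Fn n k" and new: "?t \<notin> set ?L"
      using c Q by (simp_all add: greedy_cand_def last_map)
    then have "i = Suc (length ?u)"
      using False homog_trans_ok_snoc_01_cross by blast
    moreover have "(?u @ [0, 1]) ! j = 0" "j \<noteq> i"
      using h by (auto simp: homog_trans_ok_def)
    ultimately have "last ?t = 0"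
      by (simp add: last_conv_nth transpose_at_def nth_list_update)
    then have "?t \<in> (\<lambda>v. v @ [0]) ` Fn (n - 1) k"
      using t Fn_split[OF assms(2,3)] by auto
    then show False
      using covered new by auto
  qed
qed

lemma greedy_next_snoc_0_stops:
  assumes Q: "Q \<noteq> []" and "2 \<le> n" "0 < k" and stopped: "greedy_next S' Q = None"
    and S': "\<forall>t. t @ [0] \<in> Fn n k \<longleftrightarrow> t \<in> S'"
    and H: "\<forall>h \<in> set H. \<not> suffix [0] h"
    and covered: "(\<lambda>v. v @ [0, 1]) ` Fn (n - 2) (k - 1) \<subseteq> set H"
  shows "greedy_next (Fn n k) (H @ map (\<lambda>v. v @ [0]) Q) = None"
  unfolding greedy_next_eq_None_iff
proof (intro allI notI)
  fix i j
  let ?L = "H @ map (\<lambda>v. v @ [0]) Q" and ?u = "last Q"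
  let ?t = "transpose_at (?u @ [0]) i j"
  assume c: "greedy_cand (Fn n k) ?L i j"
  show False
  proof (cases "i < length ?u \<and> j < length ?u")
    case True
    then show False
      using c stopped greedy_cand_append_iff[OF Q _ _ H S'] by (simp add: greedy_next_eq_None_iff)
  next
    case False
    have h: "homog_trans_ok (?u @ [0]) i j" and t: "?t \<in> Fn n k" and new: "?t \<notin> set ?L"
      using c Q by (simp_all add: greedy_cand_def last_map)
    then have "i < length ?u" "j = length ?u"
      using False homog_trans_ok_snoc_0_cross by blast+
    moreover have "(?u @ [0]) ! i = 1"
      using h by (simp add: homog_trans_ok_def)
    ultimately have "last ?t = 1"
      by (simp add: last_conv_nth transpose_at_def nth_list_update)
    then have "?t \<in> (\<lambda>v. v @ [0, 1]) ` Fn (n - 2) (k - 1)"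
      using t Fn_split[OF assms(2,3)] by auto
    then show False
      using covered new by auto
  qed
qed

lemma suffix_partitioned_singleton: "suffix_partitioned [u]"
  by (simp add: suffix_partitioned_def)

lemma suffix_partitioned_map_append:
  assumes "suffix_partitioned P"
  shows "suffix_partitioned (map (\<lambda>v. v @ x) P)"
  unfolding suffix_partitioned_def
proof (intro allI impI)
  fix s a b c
  assume abc: "a \<le> b \<and> b \<le> c \<and> c < length (map (\<lambda>v. v @ x) P) \<and>
    suffix s (map (\<lambda>v. v @ x) P ! a) \<and> suffix s (map (\<lambda>v. v @ x) P ! c)"
  then have sa: "suffix s (P ! a @ x)" and sc: "suffix s (P ! c @ x)"
    by auto
  show "suffix s (map (\<lambda>v. v @ x) P ! b)"
  proof (cases "suffix s x")
    case True
    then show ?thesis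
      using abc by (simp add: suffix_appendI)
  next
    case False
    then obtain s' where s': "s = s' @ x" "suffix s' (P ! a)"
      using sa by (auto simp: suffix_append)
    then have "suffix s' (P ! c)"
      using sc by simp
    then have "suffix s' (P ! b)"
      using assms abc s' unfolding suffix_partitioned_def by (metis length_map)
    then show ?thesis
      using abc s' by simp
  qed
qed

lemma suffix_partitioned_append:
  assumes "suffix_partitioned L1" "suffix_partitioned L2"
    and last_differ: "\<forall>v \<in> set L1. \<forall>w \<in> set L2. last v \<noteq> last w"
  shows "suffix_partitioned (L1 @ L2)"
  unfolding suffix_partitioned_def
proof (intro allI impI)
  fix s a b c
  assume abc: "a \<le> b \<and> b \<le> c \<and> c < length (L1 @ L2) \<and>
    suffix s ((L1 @ L2) ! a) \<and> suffix s ((L1 @ L2) ! c)"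
  consider "c < length L1" | "length L1 \<le> a" | "a < length L1" "length L1 \<le> c"
    by linarith
  then show "suffix s ((L1 @ L2) ! b)"
  proof cases
    case 1
    have ab: "a < length L1" "b < length L1"
      using abc 1 by simp_all
    have "suffix s (L1 ! a)" "suffix s (L1 ! c)"
      using abc 1 ab by (simp_all add: nth_append)
    then have "suffix s (L1 ! b)"
      using assms(1) abc 1 unfolding suffix_partitioned_def by blast
    then show ?thesis
      using ab by (simp add: nth_append)
  next
    case 2
    let ?l = "length L1"
    have "c < ?l + length L2"
      using abc by simp
    then have le: "a - ?l \<le> b - ?l" "b - ?l \<le> c - ?l" "c - ?l < length L2" "\<not> b < ?l" "\<not> c < ?l"
      using abc 2 by linarith+
    have "suffix s (L2 ! (a - ?l))" "suffix s (L2 ! (c - ?l))"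
      using abc 2 le by (simp_all add: nth_append)
    with le have "suffix s (L2 ! (b - ?l))"
      using assms(2) unfolding suffix_partitioned_def by blast
    then show ?thesis
      using le by (simp add: nth_append)
  next
    case 3
    have "s = []"
    proof (rule ccontr)
      assume "s \<noteq> []"
      moreover have "suffix s (L1 ! a)" "suffix s (L2 ! (c - length L1))"
        using abc 3 by (simp_all add: nth_append)
      ultimately have "last (L1 ! a) = last (L2 ! (c - length L1))"
        by (auto simp: suffix_def)
      moreover have "L1 ! a \<in> set L1" "L2 ! (c - length L1) \<in> set L2"
        using abc 3 by (simp_all add: less_diff_conv2)
      ultimately show False
        using last_differ by blast
    qed
    then show ?thesis by simp
  qed
qed

definition greedy_gray_code :: "nat list set \<Rightarrow> nat list \<Rightarrow> nat list \<Rightarrow> bool" where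
  "greedy_gray_code S a b \<longleftrightarrow>
     (\<exists>L. greedy_run S [a] L \<and> set L = S \<and> suffix_partitioned L \<and> last L = b)"

lemma greedy_gray_code_singleton: "greedy_gray_code {u} u u"
  unfolding greedy_gray_code_def
  using greedy_run_singleton suffix_partitioned_singleton by fastforce

lemma greedy_gray_code_start_mem:
  assumes "greedy_gray_code S a b"
  shows "a \<in> S"
proof -
  obtain L where L: "greedy_run S [a] L" "set L = S"
    using assms unfolding greedy_gray_code_def by blast
  then obtain M where "L = [a] @ M"
    using greedy_run_extends by blast
  then show ?thesis
    using L(2) by auto
qed

lemma greedy_gray_codeD:
  assumes "greedy_gray_code S a b" "finite S"
  shows "set (greedy S a) = S \<and> suffix_partitioned (greedy S a) \<and> last (greedy S a) = b"
proof -
  obtain L where "greedy_run S [a] L" "set L = S" "suffix_partitioned L" "last L = b"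
    using assms(1) unfolding greedy_gray_code_def by blast
  then show ?thesis
    using greedy_eq_if_greedy_run[OF _ assms(2)] by simp
qed

lemma greedy_gray_code_snoc_0_then_01:
  assumes n: "2 \<le> n" and k: "0 < k"
    and first: "greedy_gray_code (Fn (n - 1) k) a (x @ 1 # replicate r 0)"
    and second: "greedy_gray_code (Fn (n - 2) (k - 1)) (x @ replicate r 0) e"
  shows "greedy_gray_code (Fn n k) (a @ [0]) (e @ [0, 1])"
proof -
  obtain P1 where P1: "greedy_run (Fn (n - 1) k) [a] P1" "set P1 = Fn (n - 1) k"
      "suffix_partitioned P1" "last P1 = x @ 1 # replicate r 0"
    using first unfolding greedy_gray_code_def by blast
  obtain P2 where P2: "greedy_run (Fn (n - 2) (k - 1)) [x @ replicate r 0] P2"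
      "set P2 = Fn (n - 2) (k - 1)" "suffix_partitioned P2" "last P2 = e"
    using second unfolding greedy_gray_code_def by blast
  let ?H = "map (\<lambda>v. v @ [0]) P1"
  let ?L = "?H @ map (\<lambda>v. v @ [0, 1]) P2"
  note S0 = Fn_snoc_iffs(1)[OF n k] and S01 = Fn_snoc_iffs(2)[OF n k]
  obtain M1 M2 where M: "P1 = a # M1" "P2 = (x @ replicate r 0) # M2"
    using greedy_run_extends P1(1) P2(1) by fastforce
  have H: "\<forall>h \<in> set ?H. \<not> suffix [0, 1] h"
    by (auto simp: suffix_def)
  have "greedy_run (Fn n k) ?L ?L"
    using greedy_next_snoc_01_stops[OF _ n k greedy_run_stopped[OF P2(1)] S01 H] M P1(2)
    by (auto intro: greedy_run.stop)
  then have "greedy_run (Fn n k) (?H @ map (\<lambda>v. v @ [0, 1]) [x @ replicate r 0]) ?L"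
    using greedy_run_append[OF P2(1) _ H S01 suffix_moves_last_01] by blast
  moreover have "(x @ replicate r 0) @ [0, 1] \<in> Fn n k"
    using S01 P2(2) M(2) by (metis list.set_intros(1))
  then have "greedy_next (Fn n k) ?H = Some ((x @ replicate r 0) @ [0, 1])"
    using greedy_next_leave_snoc_0[OF _ P1(4) greedy_run_stopped[OF P1(1)] S0] M(1) by blast
  ultimately have "greedy_run (Fn n k) ([] @ ?H) ?L"
    by (auto intro: greedy_run.step)
  then have "greedy_run (Fn n k) [a @ [0]] ?L"
    using greedy_run_append[OF P1(1) _ _ S0 suffix_moves_last_0, of "[]"] by simp
  moreover have "suffix_partitioned ?L"
    using P1(3) P2(3) by (intro suffix_partitioned_append suffix_partitioned_map_append) auto
  moreover have "set ?L = Fn n k"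
    using P1(2) P2(2) Fn_split[OF n k] by auto
  ultimately show ?thesis
    unfolding greedy_gray_code_def using P2(4) M(2) by (auto simp: last_map)
qed

lemma greedy_gray_code_snoc_01_then_0:
  assumes n: "2 \<le> n" and k: "0 < k"
    and first: "greedy_gray_code (Fn (n - 2) (k - 1)) a e"
    and second: "greedy_gray_code (Fn (n - 1) k) b e'"
    and target: "leftmost_target (Fn n k) (e @ [0, 1]) (Suc (length e)) j"
    and jump: "transpose_at (e @ [0, 1]) (Suc (length e)) j = b @ [0]"
  shows "greedy_gray_code (Fn n k) (a @ [0, 1]) (e' @ [0])"
proof -
  obtain P1 where P1: "greedy_run (Fn (n - 2) (k - 1)) [a] P1" "set P1 = Fn (n - 2) (k - 1)"
      "suffix_partitioned P1" "last P1 = e"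
    using first unfolding greedy_gray_code_def by blast
  obtain P2 where P2: "greedy_run (Fn (n - 1) k) [b] P2" "set P2 = Fn (n - 1) k"
      "suffix_partitioned P2" "last P2 = e'"
    using second unfolding greedy_gray_code_def by blast
  let ?H = "map (\<lambda>v. v @ [0, 1]) P1"
  let ?L = "?H @ map (\<lambda>v. v @ [0]) P2"
  note S0 = Fn_snoc_iffs(1)[OF n k] and S01 = Fn_snoc_iffs(2)[OF n k]
  obtain M1 M2 where M: "P1 = a # M1" "P2 = b # M2"
    using greedy_run_extends P1(1) P2(1) by fastforce
  have H: "\<forall>h \<in> set ?H. \<not> suffix [0] h"
    by (auto simp: suffix_def)
  have "greedy_run (Fn n k) ?L ?L"
    using greedy_next_snoc_0_stops[OF _ n k greedy_run_stopped[OF P2(1)] S0 H] M P1(2)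
    by (auto intro: greedy_run.stop)
  then have "greedy_run (Fn n k) (?H @ map (\<lambda>v. v @ [0]) [b]) ?L"
    using greedy_run_append[OF P2(1) _ H S0 suffix_moves_last_0] by blast
  moreover have "greedy_next (Fn n k) ?H = Some (b @ [0])"
    using greedy_next_leave_snoc_01[OF _ greedy_run_stopped[OF P1(1)] S01] target jump P1(4) M(1)
    by fastforce
  ultimately have "greedy_run (Fn n k) ([] @ ?H) ?L"
    by (auto intro: greedy_run.step)
  then have "greedy_run (Fn n k) [a @ [0, 1]] ?L"
    using greedy_run_append[OF P1(1) _ _ S01 suffix_moves_last_01, of "[]"] by simp
  moreover have "suffix_partitioned ?L"
    using P1(3) P2(3) by (intro suffix_partitioned_append suffix_partitioned_map_append) auto
  moreover have "set ?L = Fn n k"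
    using P1(2) P2(2) Fn_split[OF n k] by auto
  ultimately show ?thesis
    unfolding greedy_gray_code_def using P2(4) M(2) by (auto simp: last_map)
qed

lemma leftmost_target_zeros:
  assumes "(1 # replicate r 0) @ [0] \<in> S"
  shows "leftmost_target S (replicate r 0 @ [0, 1]) (Suc r) 0"
    and "transpose_at (replicate r 0 @ [0, 1]) (Suc r) 0 = (1 # replicate r 0) @ [0]"
proof -
  show *: "transpose_at (replicate r 0 @ [0, 1]) (Suc r) 0 = (1 # replicate r 0) @ [0]"
    by (cases r) (simp_all add: transpose_at_def nth_append list_update_append replicate_app_Cons_same)
  show "leftmost_target S (replicate r 0 @ [0, 1]) (Suc r) 0"
    using assms * by (auto simp: leftmost_target_def homog_trans_ok_def nth_append)
qed

lemma leftmost_target_after_one: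
  assumes x: "x \<noteq> []" "last x = 1"
    and new: "x @ [0, 1] @ replicate r 0 @ [0] \<in> Fn n k"
  shows "leftmost_target (Fn n k) (x @ replicate (Suc r) 0 @ [0, 1]) (length x + r + 2) (Suc (length x))"
    and "transpose_at (x @ replicate (Suc r) 0 @ [0, 1]) (length x + r + 2) (Suc (length x)) =
      x @ [0, 1] @ replicate r 0 @ [0]"
proof -
  let ?w = "x @ replicate (Suc r) 0 @ [0, 1]" and ?i = "length x + r + 2" and ?a = "length x"
  have w: "?w = x @ 0 # 0 # replicate r 0 @ [1]"
    by (simp add: replicate_app_Cons_same)
  show tr: "transpose_at ?w ?i (Suc ?a) = x @ [0, 1] @ replicate r 0 @ [0]"
    unfolding w by (simp add: transpose_at_def nth_append list_update_append)
  have x1: "?w ! (?a - 1) = 1"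
    using x by (simp add: nth_append last_conv_nth)
  have "Suc ?a \<le> j'" if h: "homog_trans_ok ?w ?i j'" and t: "transpose_at ?w ?i j' \<in> Fn n k" for j'
  proof -
    have j'0: "?w ! j' = 0" and btw: "\<forall>m. min ?i j' < m \<and> m < max ?i j' \<longrightarrow> ?w ! m \<noteq> 1"
      using h by (simp_all add: homog_trans_ok_def)
    have "j' < length ?w" and wi: "?w ! ?i = 1"
      using h by (simp_all add: homog_trans_ok_def)
    with j'0 have "j' < ?i"
      by (cases "j' = ?i") auto
    have "\<not> j' < ?a - 1"
    proof
      assume "j' < ?a - 1"
      then show False
        using btw[rule_format, of "?a - 1"] x1 \<open>j' < ?i\<close> by auto
    qed
    moreover have "j' \<noteq> ?a - 1"
      using j'0 x1 by auto
    moreover have "j' \<noteq> ?a"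
    proof
      assume ja: "j' = ?a"
      let ?t = "transpose_at ?w ?i j'"
      have "?t = ?w[?i := 0, ?a := 1]"
        using j'0 wi ja by (simp add: transpose_at_def)
      moreover have "0 < ?a"
        using x by simp
      ultimately have "?t ! (?a - 1) = 1" "?t ! Suc (?a - 1) = 1" "Suc (?a - 1) < length ?t"
        using x1 by (simp_all add: nth_list_update)
      then have "\<not> no_11 ?t"
        unfolding no_11_def by blast
      then show False
        using t by (simp add: Fn_iff)
    qed
    ultimately show ?thesis by linarith
  qed
  then show "leftmost_target (Fn n k) ?w ?i (Suc ?a)"
    using new tr unfolding leftmost_target_def homog_trans_ok_def w by (auto simp: nth_append)
qed

text \<open>For 2k < n these are the words alpha (n - 1) k j together with gamma (n - 1) k; they are
  defined directly because truncated subtraction gives alpha (n - 1) k the wrong length when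
  n = 2k.\<close>
definition alpha_butlast :: "nat \<Rightarrow> nat \<Rightarrow> nat \<Rightarrow> nat list" where
  "alpha_butlast n k j = replicate j 0 @ 1 # rep01 (k - 1) @ replicate (n - 2 * k - j) 0"

lemma alpha_rep01: "alpha n k i = replicate i 0 @ 1 # rep01 (k - 1) @ replicate (n - 2 * k + 1 - i) 0"
  by (simp add: alpha_def rep01_def)

lemma gamma_rep01: "gamma n k = replicate (n - 2 * k) 0 @ rep01 k"
  by (simp add: gamma_def rep01_def)

lemma alpha_eq_alpha_butlast_snoc: "i \<le> n - 2 * k \<Longrightarrow> alpha n k i = alpha_butlast n k i @ [0]"
  by (simp add: alpha_rep01 alpha_butlast_def Suc_diff_le replicate_append_same)

lemma alpha_pred_eq_alpha_butlast:
  "2 * k < n \<Longrightarrow> i \<le> n - 1 - 2 * k \<Longrightarrow> alpha (n - 1) k i = alpha_butlast n k i"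
  by (simp add: alpha_rep01 alpha_butlast_def)

lemma gamma_pred_eq_alpha_butlast:
  assumes "2 * k < n" "0 < k"
  shows "gamma (n - 1) k = alpha_butlast n k (n - 2 * k)"
proof -
  have "n - 2 * k = Suc (n - 1 - 2 * k)" "rep01 k = 0 # 1 # rep01 (k - 1)"
    using assms rep01_Suc[of "k - 1"] by simp_all
  then show ?thesis
    by (simp add: gamma_rep01 alpha_butlast_def replicate_append_same)
qed

lemma gamma_eq_snoc_01: "0 < k \<Longrightarrow> 2 * k \<le> n \<Longrightarrow> gamma n k = gamma (n - 2) (k - 1) @ [0, 1]"
  using rep01_Suc_snoc[of "k - 1"] by (simp add: gamma_rep01)

lemma gamma_0: "gamma m 0 = replicate m 0"
  by (simp add: gamma_rep01)

lemma Fn_tight_alpha_butlast: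
  assumes "0 < k"
  shows "Fn (2 * k - 1) k = {alpha_butlast (2 * k) k 0}"
proof -
  have "2 * k - 1 = 2 * (k - 1) + 1" "k = Suc (k - 1)"
    using assms by simp_all
  then show ?thesis
    using Fn_tight[of "k - 1"] by (simp add: alpha_butlast_def)
qed

lemma alpha_butlast_1_remove_last_one:
  "j \<le> n - 2 \<Longrightarrow> \<exists>x r. alpha_butlast n 1 j = x @ 1 # replicate r 0 \<and> x @ replicate r 0 = gamma (n - 2) 0"
  by (intro exI[of _ "replicate j 0"] exI[of _ "n - 2 - j"])
    (simp add: alpha_butlast_def gamma_0 replicate_add[symmetric])

lemma alpha_butlast_remove_last_one:
  assumes "2 \<le> k" "2 * k \<le> n" "j \<le> n - 2 * k"
  shows "\<exists>x r. alpha_butlast n k j = x @ 1 # replicate r 0 \<and> x @ replicate r 0 = alpha (n - 2) (k - 1) j"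
proof -
  obtain k' where k: "k = Suc (Suc k')"
    using assms(1) by (metis add_2_eq_Suc le_Suc_ex)
  have "n - 2 - 2 * (k - 1) + 1 - j = Suc (n - 2 * k - j)"
    using assms by simp
  then show ?thesis
    by (intro exI[of _ "replicate j 0 @ 1 # rep01 k' @ [0]"] exI[of _ "n - 2 * k - j"])
      (simp add: alpha_butlast_def alpha_rep01 rep01_Suc_snoc k)
qed

lemma alpha_butlast_insert_01:
  assumes "2 \<le> k" "2 * k \<le> n" "j \<le> n - 2 * k"
  shows "\<exists>x r. x \<noteq> [] \<and> last x = 1 \<and> alpha (n - 2) (k - 1) j = x @ replicate (Suc r) 0 \<and>
    alpha_butlast n k j = x @ [0, 1] @ replicate r 0"
proof -
  obtain k' where k: "k = Suc (Suc k')"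
    using assms(1) by (metis add_2_eq_Suc le_Suc_ex)
  have "n - 2 - 2 * (k - 1) + 1 - j = Suc (n - 2 * k - j)"
    using assms by simp
  moreover have "last (replicate j 0 @ 1 # rep01 k') = 1"
    by (cases k') (simp_all add: rep01_Suc_snoc)
  ultimately show ?thesis
    by (intro exI[of _ "replicate j 0 @ 1 # rep01 k'"] exI[of _ "n - 2 * k - j"])
      (simp add: alpha_butlast_def alpha_rep01 rep01_Suc_snoc k)
qed

definition greedy_gray_codes :: "nat \<Rightarrow> nat \<Rightarrow> bool" where
  "greedy_gray_codes n k \<longleftrightarrow>
     (\<forall>i \<le> n - 2 * k. greedy_gray_code (Fn n k) (alpha n k i) (gamma n k)) \<and>
     greedy_gray_code (Fn n k) (gamma n k) (if even k then alpha n k 0 else alpha n k (n - 2 * k))"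

lemma greedy_gray_codes_alpha_butlast:
  assumes k: "0 < k" and n: "2 * k \<le> n" and IH: "2 * k < n \<longrightarrow> greedy_gray_codes (n - 1) k"
  shows "i < n - 2 * k \<Longrightarrow>
      greedy_gray_code (Fn (n - 1) k) (alpha_butlast n k i) (alpha_butlast n k (n - 2 * k))"
    and "greedy_gray_code (Fn (n - 1) k) (alpha_butlast n k (n - 2 * k))
      (alpha_butlast n k (if even k then 0 else n - 2 * k - 1))"
proof -
  show "greedy_gray_code (Fn (n - 1) k) (alpha_butlast n k i) (alpha_butlast n k (n - 2 * k))"
    if i: "i < n - 2 * k"
  proof -
    have gt: "2 * k < n" and "i \<le> n - 1 - 2 * k"
      using i by simp_all
    then show ?thesis
      using IH alpha_pred_eq_alpha_butlast[OF gt] gamma_pred_eq_alpha_butlast[OF gt k]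
      unfolding greedy_gray_codes_def by simp
  qed
  show "greedy_gray_code (Fn (n - 1) k) (alpha_butlast n k (n - 2 * k))
      (alpha_butlast n k (if even k then 0 else n - 2 * k - 1))"
  proof (cases "n = 2 * k")
    case True
    then show ?thesis
      using Fn_tight_alpha_butlast[OF k] greedy_gray_code_singleton by simp
  next
    case False
    then have gt: "2 * k < n"
      using n by simp
    have "alpha (n - 1) k 0 = alpha_butlast n k 0"
      "alpha (n - 1) k (n - 1 - 2 * k) = alpha_butlast n k (n - 2 * k - 1)"
      using alpha_pred_eq_alpha_butlast[OF gt] by simp_all
    then show ?thesis
      using IH gt gamma_pred_eq_alpha_butlast[OF gt k] unfolding greedy_gray_codes_def
      by (cases "even k") simp_all
  qed
qed

lemma greedy_gray_code_from_alpha: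
  assumes k: "0 < k" and n: "2 * k \<le> n" and i: "i \<le> n - 2 * k"
    and IH1: "2 * k < n \<longrightarrow> greedy_gray_codes (n - 1) k"
    and IH2: "2 \<le> k \<longrightarrow> greedy_gray_codes (n - 2) (k - 1)"
  shows "greedy_gray_code (Fn n k) (alpha n k i) (gamma n k)"
proof -
  obtain j where j: "j \<le> n - 2 * k"
    and first: "greedy_gray_code (Fn (n - 1) k) (alpha_butlast n k i) (alpha_butlast n k j)"
  proof (cases "i < n - 2 * k")
    case True
    then show thesis
      using that greedy_gray_codes_alpha_butlast(1)[OF k n IH1] by blast
  next
    case False
    then have "i = n - 2 * k"
      using i by simp
    then show thesis
      using that[of "if even k then 0 else n - 2 * k - 1"] greedy_gray_codes_alpha_butlast(2)[OF k n IH1]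
      by (cases "even k") simp_all
  qed
  obtain x r where split: "alpha_butlast n k j = x @ 1 # replicate r 0"
    and second: "greedy_gray_code (Fn (n - 2) (k - 1)) (x @ replicate r 0) (gamma (n - 2) (k - 1))"
  proof (cases "k = 1")
    case True
    then show thesis
      using that alpha_butlast_1_remove_last_one[of j n] j greedy_gray_code_singleton
      by (auto simp: Fn_0 gamma_0)
  next
    case False
    then have "2 \<le> k" "j \<le> n - 2 - 2 * (k - 1)"
      using k j by simp_all
    then show thesis
      using that alpha_butlast_remove_last_one[OF _ n j] IH2 unfolding greedy_gray_codes_def by metis
  qed
  have "2 \<le> n"
    using k n by simp
  then show ?thesis
    using greedy_gray_code_snoc_0_then_01[OF _ k first[unfolded split] second]
      alpha_eq_alpha_butlast_snoc[OF i] gamma_eq_snoc_01[OF k n] by simp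
qed

lemma greedy_gray_code_gamma_first_block:
  assumes k: "0 < k" and n: "2 * k \<le> n"
    and IH2: "2 \<le> k \<longrightarrow> greedy_gray_codes (n - 2) (k - 1)"
    and j: "j = (if odd k then 0 else n - 2 * k)"
    and new: "alpha_butlast n k j @ [0] \<in> Fn n k"
  obtains e p where "greedy_gray_code (Fn (n - 2) (k - 1)) (gamma (n - 2) (k - 1)) e"
    and "leftmost_target (Fn n k) (e @ [0, 1]) (Suc (length e)) p"
    and "transpose_at (e @ [0, 1]) (Suc (length e)) p = alpha_butlast n k j @ [0]"
proof (cases "k = 1")
  case True
  have ab: "alpha_butlast n k j = 1 # replicate (n - 2) 0"
    using True by (simp add: j alpha_butlast_def)
  show thesis
  proof (rule that)
    show "greedy_gray_code (Fn (n - 2) (k - 1)) (gamma (n - 2) (k - 1)) (replicate (n - 2) 0)"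
      using True greedy_gray_code_singleton by (simp add: Fn_0 gamma_0)
    show "leftmost_target (Fn n k) (replicate (n - 2) 0 @ [0, 1])
        (Suc (length (replicate (n - 2) 0))) 0"
      using leftmost_target_zeros(1) new ab by simp
    show "transpose_at (replicate (n - 2) 0 @ [0, 1]) (Suc (length (replicate (n - 2) (0::nat)))) 0 =
        alpha_butlast n k j @ [0]"
      using leftmost_target_zeros(2) new ab by simp
  qed
next
  case False
  then have k2: "2 \<le> k"
    using k by simp
  have j': "j \<le> n - 2 * k" "(if even (k - 1) then 0 else n - 2 - 2 * (k - 1)) = j"
    using n k2 by (auto simp: j)
  obtain x r where x: "x \<noteq> []" "last x = 1" and e: "alpha (n - 2) (k - 1) j = x @ replicate (Suc r) 0"
    and ab: "alpha_butlast n k j = x @ [0, 1] @ replicate r 0"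
    using alpha_butlast_insert_01[OF k2 n j'(1)] by blast
  have len: "Suc (length (alpha (n - 2) (k - 1) j)) = length x + r + 2"
    using e by simp
  show thesis
  proof (rule that)
    show "greedy_gray_code (Fn (n - 2) (k - 1)) (gamma (n - 2) (k - 1)) (alpha (n - 2) (k - 1) j)"
      using IH2 k2 j'(2) unfolding greedy_gray_codes_def by (cases "odd k") simp_all
    show "leftmost_target (Fn n k) (alpha (n - 2) (k - 1) j @ [0, 1])
        (Suc (length (alpha (n - 2) (k - 1) j))) (Suc (length x))"
      using leftmost_target_after_one(1)[OF x, of r n k] new ab e len by simp
    show "transpose_at (alpha (n - 2) (k - 1) j @ [0, 1]) (Suc (length (alpha (n - 2) (k - 1) j)))
        (Suc (length x)) = alpha_butlast n k j @ [0]"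
      using leftmost_target_after_one(2)[OF x, of r n k] new ab e len by simp
  qed
qed

lemma greedy_gray_code_from_gamma:
  assumes k: "0 < k" and n: "2 * k \<le> n"
    and IH1: "2 * k < n \<longrightarrow> greedy_gray_codes (n - 1) k"
    and IH2: "2 \<le> k \<longrightarrow> greedy_gray_codes (n - 2) (k - 1)"
  shows "greedy_gray_code (Fn n k) (gamma n k) (if even k then alpha n k 0 else alpha n k (n - 2 * k))"
proof -
  define j where "j = (if odd k then 0 else n - 2 * k)"
  define j' where "j' = (if even k then 0 else n - 2 * k)"
  have n2: "2 \<le> n"
    using k n by simp
  have second: "greedy_gray_code (Fn (n - 1) k) (alpha_butlast n k j) (alpha_butlast n k j')"
  proof (cases "odd k \<and> 2 * k < n")
    case True
    then show ?thesis
      using greedy_gray_codes_alpha_butlast(1)[OF k n IH1, of 0] by (simp add: j_def j'_def)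
  next
    case False
    then show ?thesis
      using greedy_gray_codes_alpha_butlast(2)[OF k n IH1] n by (auto simp: j_def j'_def)
  qed
  have "alpha_butlast n k j @ [0] \<in> Fn n k"
    using greedy_gray_code_start_mem[OF second] Fn_snoc_iffs(1)[OF n2 k] by blast
  then obtain e p where first: "greedy_gray_code (Fn (n - 2) (k - 1)) (gamma (n - 2) (k - 1)) e"
    and target: "leftmost_target (Fn n k) (e @ [0, 1]) (Suc (length e)) p"
    and jump: "transpose_at (e @ [0, 1]) (Suc (length e)) p = alpha_butlast n k j @ [0]"
    using greedy_gray_code_gamma_first_block[OF k n IH2 j_def] by blast
  have "(if even k then alpha n k 0 else alpha n k (n - 2 * k)) = alpha_butlast n k j' @ [0]"
    using alpha_eq_alpha_butlast_snoc[of _ n k] by (simp add: j'_def)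
  then show ?thesis
    using greedy_gray_code_snoc_01_then_0[OF n2 k first second target jump] gamma_eq_snoc_01[OF k n]
    by simp
qed

lemma greedy_gray_codes: "0 < k \<Longrightarrow> 2 * k \<le> n \<Longrightarrow> greedy_gray_codes n k"
proof (induction n arbitrary: k rule: less_induct)
  case (less n)
  have IH1: "2 * k < n \<longrightarrow> greedy_gray_codes (n - 1) k"
    using less by simp
  have IH2: "2 \<le> k \<longrightarrow> greedy_gray_codes (n - 2) (k - 1)"
    using less by simp
  show ?case
    unfolding greedy_gray_codes_def
    using greedy_gray_code_from_alpha[OF less.prems _ IH1 IH2]
      greedy_gray_code_from_gamma[OF less.prems IH1 IH2] by blast
qed

theorem theorem2:
  fixes n k :: nat
  assumes "n \<ge> 1" and "k \<ge> 1" and "n \<ge> 2 * k"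
  shows "(\<forall>i. i \<le> n - 2 * k \<longrightarrow>
            Fn n k \<subseteq> set (calF n k (alpha n k i)) \<and>
            suffix_partitioned (calF n k (alpha n k i)) \<and>
            last (calF n k (alpha n k i)) = gamma n k)
       \<and> (Fn n k \<subseteq> set (calF n k (gamma n k)) \<and>
          suffix_partitioned (calF n k (gamma n k)) \<and>
          last (calF n k (gamma n k)) =
            (if even k then alpha n k 0 else alpha n k (n - 2 * k)))"
proof -
  have calF: "Fn n k \<subseteq> set (calF n k a) \<and> suffix_partitioned (calF n k a) \<and> last (calF n k a) = b"
    if "greedy_gray_code (Fn n k) a b" for a b
    using greedy_gray_codeD[OF that finite_Fn] unfolding calF_def by simp
  have "greedy_gray_codes n k"
    using assms by (simp add: greedy_gray_codes)
  then show ?thesis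
    unfolding greedy_gray_codes_def using calF by blast
qed

end
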